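(* Let $G$ be a finite group generated by reflections of a real Euclidean space $V$ with root system $R$. For any special involution $\sigma\in G$, the centraliser $C(\sigma)=\{g\in G:g\sigma=\sigma g\}$ coincides with the product $G_1\times G_2$ of the corresponding Coxeter subgroups.
   Context: For an involution $\sigma\in G$ (including the identity), let $V_1=\{v:\sigma v=-v\}$ and $V_2=\{v:\sigma v=v\}$, $R_i=R\cap V_i$, and $G_i$ the subgroup of $G$ generated by the reflections in the roots of $R_i$ ($i=1,2$); $G_1$ and $G_2$ commute and intersect trivially, so $G_1G_2\cong G_1\times G_2$. The involution $\sigma$ is called special if for every root $a\in R$ at least one of the orthogonal projections of $a$ onto $V_1$ and onto $V_2$ is proportional to a root from $R_1$ or $R_2$. *)

theory Defs
  imports "HOL-Analysis.Analysis"
begin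

definition refl :: "'a::euclidean_space \<Rightarrow> 'a \<Rightarrow> 'a" where
  "refl a v = v - (2 * (v \<bullet> a) / (a \<bullet> a)) *\<^sub>R a"

text \<open>Group generated by a set S of involutive linear maps: smallest set containing
  the identity and closed under left composition with generators (since every generator
  is its own inverse this is the generated group).\<close>
inductive_set gen_group :: "('a \<Rightarrow> 'a) set \<Rightarrow> ('a \<Rightarrow> 'a) set" for S where
  gen_id: "id \<in> gen_group S"
| gen_step: "s \<in> S \<Longrightarrow> g \<in> gen_group S \<Longrightarrow> s \<circ> g \<in> gen_group S"

definition root_system :: "'a::euclidean_space set \<Rightarrow> bool" where
  "root_system R \<longleftrightarrow> finite R \<and> 0 \<notin> R \<and> (\<forall>a\<in>R. refl a ` R = R)"

definition refl_group :: "'a::euclidean_space set \<Rightarrow> ('a \<Rightarrow> 'a) set" where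
  "refl_group R = gen_group (refl ` R)"

definition orth_proj :: "'a::euclidean_space set \<Rightarrow> 'a \<Rightarrow> 'a" where
  "orth_proj U a = (THE u. u \<in> U \<and> (\<forall>w\<in>U. (a - u) \<bullet> w = 0))"

definition minus_space :: "('a::euclidean_space \<Rightarrow> 'a) \<Rightarrow> 'a set" where
  "minus_space \<sigma> = {v. \<sigma> v = - v}"

definition plus_space :: "('a::euclidean_space \<Rightarrow> 'a) \<Rightarrow> 'a set" where
  "plus_space \<sigma> = {v. \<sigma> v = v}"

definition proportional_to_root :: "'a::euclidean_space set \<Rightarrow> 'a \<Rightarrow> bool" where
  "proportional_to_root S v \<longleftrightarrow> (\<exists>b\<in>S. \<exists>c::real. v = c *\<^sub>R b)"

definition special_involution :: "'a::euclidean_space set \<Rightarrow> ('a \<Rightarrow> 'a) \<Rightarrow> bool" where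
  "special_involution R \<sigma> \<longleftrightarrow>
     \<sigma> \<in> refl_group R \<and> \<sigma> \<circ> \<sigma> = id \<and>
     (\<forall>a\<in>R.
        proportional_to_root (R \<inter> minus_space \<sigma> \<union> R \<inter> plus_space \<sigma>)
          (orth_proj (minus_space \<sigma>) a) \<or>
        proportional_to_root (R \<inter> minus_space \<sigma> \<union> R \<inter> plus_space \<sigma>)
          (orth_proj (plus_space \<sigma>) a))"

definition centraliser :: "('a \<Rightarrow> 'a) set \<Rightarrow> ('a \<Rightarrow> 'a) \<Rightarrow> ('a \<Rightarrow> 'a) set" where
  "centraliser G \<sigma> = {g \<in> G. g \<circ> \<sigma> = \<sigma> \<circ> g}"

definition set_prod :: "('a \<Rightarrow> 'a) set \<Rightarrow> ('a \<Rightarrow> 'a) set \<Rightarrow> ('a \<Rightarrow> 'a) set" where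
  "set_prod A B = {g1 \<circ> g2 | g1 g2. g1 \<in> A \<and> g2 \<in> B}"

end

theory Submission
  imports Defs
begin

text \<open>
  The key fact is that an element of \<open>G\<close> fixing a regular vector \<open>z\<close> (one orthogonal to no
  root) is the identity: \<open>G\<close> is generated by the simple reflections determined by \<open>z\<close>, and
  a word in them fixing \<open>z\<close> can be shortened by a deletion argument.

  Let \<open>g\<close> commute with \<open>\<sigma>\<close>. For a regular \<open>x\<close>, the vectors \<open>x\<^sub>1 = x - \<sigma> x \<in> V\<^sub>1\<close>
  and \<open>x\<^sub>2 = x + \<sigma> x \<in> V\<^sub>2\<close> are regular for \<open>R\<^sub>1\<close> and \<open>R\<^sub>2\<close>. Choosing \<open>h\<^sub>i \<in> G\<^sub>i\<close> that maximise an inner product moves \<open>g x\<^sub>i\<close>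
  into the closed \<open>R\<^sub>i\<close>-chamber of \<open>x\<^sub>i\<close>. Then \<open>k = h\<^sub>2 h\<^sub>1 g\<close> commutes with \<open>\<sigma>\<close>,
  permutes \<open>R\<^sub>i\<close> and maps the open \<open>R\<^sub>i\<close>-chamber of \<open>x\<^sub>i\<close> to itself, so averaging
  over the powers of \<open>k\<close> yields \<open>k\<close>-fixed vectors \<open>y\<^sub>i \<in> V\<^sub>i\<close> regular for \<open>R\<^sub>i\<close>.
  Since \<open>\<sigma>\<close> is special, every root has nonzero inner product with \<open>y\<^sub>1\<close> or with
  \<open>y\<^sub>2\<close>, so some \<open>y\<^sub>1 + t y\<^sub>2\<close> is regular for \<open>R\<close>; it is fixed by \<open>k\<close>, hence
  \<open>k = 1\<close> and \<open>g = h\<^sub>1\<^sup>-\<^sup>1 h\<^sub>2\<^sup>-\<^sup>1 \<in> G\<^sub>1 G\<^sub>2\<close>.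
\<close>

section \<open>Reflections and the groups they generate\<close>

lemma linear_refl: "linear (refl a)"
  by (rule linearI) (simp_all add: refl_def inner_add_left add_divide_distrib algebra_simps)

lemma inner_refl_left: "refl a x \<bullet> y = x \<bullet> refl a y"
  by (simp add: refl_def inner_diff_left inner_diff_right inner_commute)

lemma refl_refl [simp]: "refl a (refl a x) = x"
  by (cases "a = 0") (simp_all add: refl_def inner_diff_left field_simps algebra_simps)

lemma refl_comp_refl [simp]: "refl a \<circ> refl a = id"
  by (simp add: fun_eq_iff)

lemma orthogonal_transformation_refl: "orthogonal_transformation (refl a)"
  by (simp add: orthogonal_transformation_def linear_refl inner_refl_left)

lemma refl_self: "a \<noteq> 0 \<Longrightarrow> refl a a = - a"
  by (simp add: refl_def algebra_simps scaleR_2)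

lemma refl_orthogonal: "x \<bullet> a = 0 \<Longrightarrow> refl a x = x"
  by (simp add: refl_def)

lemma refl_scaleR: "c \<noteq> 0 \<Longrightarrow> refl (c *\<^sub>R a) = refl a"
  by (rule ext) (simp add: refl_def field_simps)

lemma refl_uminus [simp]: "refl (- a) = refl a"
  using refl_scaleR[of "-1" a] by simp

lemma orthogonal_transformation_refl_conj:
  assumes "orthogonal_transformation u"
  shows "u (refl r x) = refl (u r) (u x)"
  using assms
  by (simp add: orthogonal_transformation_def refl_def linear_diff linear_scale)

lemma root_system_uminus: "root_system R \<Longrightarrow> a \<in> R \<Longrightarrow> - a \<in> R"
  unfolding root_system_def by (metis imageI refl_self)

lemma root_system_refl: "root_system R \<Longrightarrow> a \<in> R \<Longrightarrow> b \<in> R \<Longrightarrow> refl a b \<in> R"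
  unfolding root_system_def by blast

lemma gen_group_generator: "s \<in> S \<Longrightarrow> s \<in> gen_group S"
  using gen_group.gen_step[OF _ gen_group.gen_id, of s S] by simp

lemma gen_group_comp: "g \<in> gen_group S \<Longrightarrow> h \<in> gen_group S \<Longrightarrow> g \<circ> h \<in> gen_group S"
  by (induction g rule: gen_group.induct) (auto simp: comp_assoc intro: gen_group.intros)

lemma gen_group_mono:
  assumes "S \<subseteq> T"
  shows "gen_group S \<subseteq> gen_group T"
proof
  fix g assume "g \<in> gen_group S"
  then show "g \<in> gen_group T"
    by (induction g rule: gen_group.induct) (use assms in \<open>blast intro: gen_group.intros\<close>)+
qed

lemma gen_group_inverse:
  assumes "g \<in> gen_group S" and "\<And>s. s \<in> S \<Longrightarrow> s \<circ> s = id"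
  shows "\<exists>g'\<in>gen_group S. g' \<circ> g = id"
  using assms(1)
proof (induction g rule: gen_group.induct)
  case gen_id
  show ?case using gen_group.gen_id by (metis comp_id)
next
  case (gen_step s g)
  then obtain g' where g': "g' \<in> gen_group S" "g' \<circ> g = id" by blast
  have "g' \<circ> s \<in> gen_group S"
    using g'(1) gen_step(1) by (blast intro: gen_group_comp gen_group_generator)
  moreover have "(g' \<circ> s) \<circ> (s \<circ> g) = id"
    using g'(2) assms(2)[OF gen_step(1)] by (metis comp_assoc comp_id)
  ultimately show ?case by blast
qed

lemma gen_group_commute:
  assumes "\<forall>s\<in>S. s \<circ> f = f \<circ> s" and "g \<in> gen_group S"
  shows "g \<circ> f = f \<circ> g"
  using assms(2)
proof (induction g rule: gen_group.induct)
  case gen_id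
  show ?case by simp
next
  case (gen_step s g)
  then have "s (g (f x)) = f (s (g x))" for x using assms(1) by (metis comp_apply)
  then show ?case by (simp add: fun_eq_iff)
qed

lemma id_in_refl_group: "id \<in> refl_group R"
  unfolding refl_group_def by (rule gen_group.gen_id)

lemma refl_in_refl_group: "a \<in> R \<Longrightarrow> refl a \<in> refl_group R"
  unfolding refl_group_def by (rule gen_group_generator) simp

lemma refl_group_comp: "g \<in> refl_group R \<Longrightarrow> h \<in> refl_group R \<Longrightarrow> g \<circ> h \<in> refl_group R"
  unfolding refl_group_def by (rule gen_group_comp)

lemma refl_group_mono: "S \<subseteq> T \<Longrightarrow> refl_group S \<subseteq> refl_group T"
  unfolding refl_group_def by (intro gen_group_mono image_mono)

lemma refl_group_inverse: "g \<in> refl_group R \<Longrightarrow> \<exists>g'\<in>refl_group R. g' \<circ> g = id"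
  unfolding refl_group_def by (rule gen_group_inverse) auto

lemma orthogonal_transformation_refl_group:
  "g \<in> refl_group R \<Longrightarrow> orthogonal_transformation g"
  unfolding refl_group_def
proof (induction g rule: gen_group.induct)
  case gen_id
  show ?case by (simp add: id_def)
next
  case (gen_step s g)
  then show ?case by (metis imageE orthogonal_transformation_compose orthogonal_transformation_refl)
qed

lemma refl_group_image_roots:
  assumes "root_system R" and "g \<in> refl_group R"
  shows "g ` R = R"
  using assms(2) unfolding refl_group_def
proof (induction g rule: gen_group.induct)
  case gen_id
  show ?case by simp
next
  case (gen_step s g)
  then obtain a where "a \<in> R" "s = refl a" by blast
  then have "(s \<circ> g) ` R = refl a ` R" using gen_step.IH by (metis image_comp)
  then show ?case using \<open>a \<in> R\<close> assms(1) by (simp add: root_system_def)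
qed

lemma refl_group_fixes_orthogonal:
  assumes "\<forall>b\<in>B. w \<bullet> b = 0" and "g \<in> refl_group B"
  shows "g w = w"
  using assms(2) unfolding refl_group_def
  by (induction g rule: gen_group.induct) (use assms(1) in \<open>auto simp: refl_orthogonal\<close>)

definition refl_word :: "'a::euclidean_space list \<Rightarrow> 'a \<Rightarrow> 'a" where
  "refl_word es = foldr (\<lambda>e f. refl e \<circ> f) es id"

lemma refl_word_Nil [simp]: "refl_word [] = id"
  by (simp add: refl_word_def)

lemma refl_word_Cons [simp]: "refl_word (e # es) = refl e \<circ> refl_word es"
  by (simp add: refl_word_def)

lemma refl_word_append: "refl_word (xs @ ys) = refl_word xs \<circ> refl_word ys"
  by (induction xs) (simp_all add: comp_assoc)

lemma refl_group_iff_word: "g \<in> refl_group S \<longleftrightarrow> (\<exists>es. set es \<subseteq> S \<and> g = refl_word es)"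
proof
  assume "g \<in> refl_group S"
  then show "\<exists>es. set es \<subseteq> S \<and> g = refl_word es"
    unfolding refl_group_def
  proof (induction g rule: gen_group.induct)
    case gen_id
    show ?case by (rule exI[of _ "[]"]) simp
  next
    case (gen_step s g)
    then obtain es e where "set es \<subseteq> S" "g = refl_word es" "e \<in> S" "s = refl e" by blast
    then show ?case by (intro exI[of _ "e # es"]) simp
  qed
next
  assume "\<exists>es. set es \<subseteq> S \<and> g = refl_word es"
  then obtain es where "set es \<subseteq> S" "g = refl_word es" by blast
  then show "g \<in> refl_group S"
    by (induction es arbitrary: g) (auto intro: id_in_refl_group refl_group_comp refl_in_refl_group)
qed

section \<open>Regular vectors\<close>

definition regular_vector :: "'a::euclidean_space set \<Rightarrow> 'a \<Rightarrow> bool" where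
  "regular_vector B x \<longleftrightarrow> (\<forall>b\<in>B. b \<bullet> x \<noteq> 0)"

lemma regular_vector_refl_group:
  assumes "root_system R" "g \<in> refl_group R" "regular_vector R z"
  shows "regular_vector R (g z)"
  unfolding regular_vector_def
proof
  fix a assume "a \<in> R"
  then obtain r where "r \<in> R" "a = g r"
    using refl_group_image_roots[OF assms(1,2)] by blast
  then show "a \<bullet> g z \<noteq> 0"
    using orthogonal_transformation_refl_group[OF assms(2)] assms(3)
    by (simp add: orthogonal_transformation_def regular_vector_def)
qed

lemma exists_regular_combination:
  assumes "finite B" and "\<forall>b\<in>B. b \<bullet> x \<noteq> 0 \<or> b \<bullet> y \<noteq> 0"
  shows "\<exists>t. regular_vector B (x + t *\<^sub>R y)"
proof -
  have "finite ((\<lambda>b. - (b \<bullet> x) / (b \<bullet> y)) ` B)" using assms(1) by simp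
  then obtain t :: real where t: "t \<notin> (\<lambda>b. - (b \<bullet> x) / (b \<bullet> y)) ` B"
    using ex_new_if_finite[OF infinite_UNIV_char_0] by blast
  have "b \<bullet> x + t * (b \<bullet> y) \<noteq> 0" if "b \<in> B" for b
  proof (cases "b \<bullet> y = 0")
    case True
    then show ?thesis using assms(2) that by auto
  next
    case False
    show ?thesis
    proof
      assume "b \<bullet> x + t * (b \<bullet> y) = 0"
      then have "t = - (b \<bullet> x) / (b \<bullet> y)" using False by (simp add: field_simps)
      then show False using t that by simp
    qed
  qed
  then show ?thesis by (auto simp: regular_vector_def inner_add_right)
qed

lemma exists_regular_vector:
  assumes "finite B" and "0 \<notin> B"
  shows "\<exists>x. regular_vector B x"
  using assms
proof (induction B rule: finite_induct)
  case empty
  then show ?case by (simp add: regular_vector_def)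
next
  case (insert c B)
  then obtain x where "regular_vector B x" by auto
  then have "\<forall>b\<in>insert c B. b \<bullet> x \<noteq> 0 \<or> b \<bullet> c \<noteq> 0"
    using insert.prems by (auto simp: regular_vector_def)
  then show ?case using exists_regular_combination insert.hyps(1) by blast
qed

section \<open>Simple roots and the stabiliser of a regular vector\<close>

lemma nat_sign_change:
  fixes f :: "nat \<Rightarrow> 'a::linorder"
  assumes "f i \<le> c" and "c < f j" and "i \<le> j"
  shows "\<exists>m. i \<le> m \<and> m < j \<and> f m \<le> c \<and> c < f (Suc m)"
  using assms
proof (induction j)
  case 0
  then show ?case by simp
next
  case (Suc j)
  show ?case
  proof (cases "c < f j \<and> i \<le> j")
    case True
    then show ?thesis using Suc by (meson less_Suc_eq)
  next
    case False
    then show ?thesis using Suc.prems by (metis le_Suc_eq lessI not_less)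
  qed
qed

locale positive_system =
  fixes R :: "'a::euclidean_space set" and z :: 'a
  assumes root_system: "root_system R" and regular: "regular_vector R z"
begin

definition positive_roots :: "'a set" where
  "positive_roots = {a \<in> R. 0 < a \<bullet> z}"

definition normalised :: "'a \<Rightarrow> 'a" where
  "normalised a = (1 / (a \<bullet> z)) *\<^sub>R a"

text \<open>The positive roots, rescaled onto the affine hyperplane \<open>x \<bullet> z = 1\<close>, span a polytope;
  its vertices are the simple roots.\<close>
definition simple_roots :: "'a set" where
  "simple_roots = {e. e extreme_point_of convex hull (normalised ` positive_roots)}"

lemma finite_positive_roots: "finite positive_roots"
  using root_system by (simp add: positive_roots_def root_system_def)

lemma normalised_in_hull: "a \<in> positive_roots \<Longrightarrow> normalised a \<in> convex hull (normalised ` positive_roots)"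
  by (simp add: hull_inc)

lemma inner_normalised: "a \<in> positive_roots \<Longrightarrow> normalised a \<bullet> z = 1"
  by (simp add: positive_roots_def normalised_def)

lemma refl_normalised: "a \<in> positive_roots \<Longrightarrow> refl (normalised a) = refl a"
  by (simp add: positive_roots_def normalised_def refl_scaleR)

lemma simple_roots_subset: "simple_roots \<subseteq> normalised ` positive_roots"
  unfolding simple_roots_def using extreme_point_of_convex_hull by blast

lemma finite_simple_roots: "finite simple_roots"
  using finite_subset[OF simple_roots_subset] finite_positive_roots by blast

lemma positive_root_uminus: "a \<in> R \<Longrightarrow> a \<bullet> z < 0 \<Longrightarrow> - a \<in> positive_roots"
  using root_system_uminus[OF root_system] by (simp add: positive_roots_def)

lemma positive_roots_cases: "a \<in> R \<Longrightarrow> a \<in> positive_roots \<or> - a \<in> positive_roots"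
  using regular positive_root_uminus by (force simp: positive_roots_def regular_vector_def)

lemma normalised_sum_in_segment:
  assumes a: "a \<in> positive_roots" and b: "b \<in> positive_roots"
    and e: "e \<bullet> z = 1" "a + b = c *\<^sub>R e"
  shows "e \<in> closed_segment (normalised a) (normalised b)"
proof -
  have az: "0 < a \<bullet> z" and bz: "0 < b \<bullet> z" using a b by (auto simp: positive_roots_def)
  have c: "c = a \<bullet> z + b \<bullet> z" using arg_cong[OF e(2), of "\<lambda>v. v \<bullet> z"] e(1)
    by (simp add: inner_add_left)
  with az bz have "0 < c" by simp
  define u where "u = (b \<bullet> z) / c"
  have u: "0 \<le> u" "u \<le> 1" using \<open>0 < c\<close> az bz c by (auto simp: u_def divide_le_eq)
  have "1 - u = (a \<bullet> z) / c" using \<open>0 < c\<close> c by (simp add: u_def field_simps)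
  then have "(1 - u) *\<^sub>R normalised a = (1 / c) *\<^sub>R a" using az by (simp add: normalised_def)
  moreover have "u *\<^sub>R normalised b = (1 / c) *\<^sub>R b" using bz by (simp add: normalised_def u_def)
  moreover have "(1 / c) *\<^sub>R (a + b) = e" using \<open>0 < c\<close> e(2) by simp
  ultimately have "e = (1 - u) *\<^sub>R normalised a + u *\<^sub>R normalised b"
    by (simp add: scaleR_add_right)
  then show ?thesis using u by (auto simp: in_segment)
qed

lemma refl_simple_root_positive:
  assumes e: "e \<in> simple_roots" and a: "a \<in> positive_roots" and not_prop: "\<forall>c. a \<noteq> c *\<^sub>R e"
  shows "refl e a \<in> positive_roots"
proof (rule ccontr)
  assume not_pos: "refl e a \<notin> positive_roots"
  obtain a0 where a0: "a0 \<in> positive_roots" "e = normalised a0"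
    using e simple_roots_subset by blast
  have ez: "e \<bullet> z = 1" using a0 inner_normalised by simp
  have ea: "refl e a \<in> R"
    using root_system_refl[OF root_system] a0 a by (simp add: refl_normalised positive_roots_def)
  have "refl e a \<bullet> z \<noteq> 0" using regular ea by (simp add: regular_vector_def)
  moreover have "\<not> 0 < refl e a \<bullet> z" using not_pos ea by (simp add: positive_roots_def)
  ultimately have "refl e a \<bullet> z < 0" by linarith
  define c where "c = 2 * (a \<bullet> e) / (e \<bullet> e)"
  define b where "b = c *\<^sub>R e - a"
  have "refl e a = - b" by (simp add: refl_def b_def c_def)
  then have b: "b \<in> positive_roots"
    using positive_root_uminus[OF ea \<open>refl e a \<bullet> z < 0\<close>] by simp
  have "e \<in> closed_segment (normalised a) (normalised b)"
    using normalised_sum_in_segment[OF a b ez, of c] by (simp add: b_def)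
  moreover have "e \<noteq> normalised a"
  proof
    assume "e = normalised a"
    then have "a = (a \<bullet> z) *\<^sub>R e" using a by (simp add: normalised_def positive_roots_def)
    then show False using not_prop by blast
  qed
  moreover have "e \<noteq> normalised b"
  proof
    assume "e = normalised b"
    then have "b = (b \<bullet> z) *\<^sub>R e" using b by (simp add: normalised_def positive_roots_def)
    moreover have "a = c *\<^sub>R e - b" by (simp add: b_def)
    ultimately have "a = (c - b \<bullet> z) *\<^sub>R e" by (simp add: scaleR_diff_left)
    then show False using not_prop by blast
  qed
  ultimately have "e \<in> open_segment (normalised a) (normalised b)"
    by (simp add: open_segment_def)
  moreover have "e extreme_point_of convex hull (normalised ` positive_roots)"
    using e by (simp add: simple_roots_def)
  ultimately show False
    using normalised_in_hull[OF a] normalised_in_hull[OF b] by (simp add: extreme_point_of_def)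
qed

lemma exists_simple_root_inner_pos:
  assumes a: "a \<in> positive_roots"
  shows "\<exists>e\<in>simple_roots. 0 < a \<bullet> e"
proof (rule ccontr)
  assume "\<not> ?thesis"
  then have le: "a \<bullet> e \<le> 0" if "e \<in> simple_roots" for e using that by force
  have "normalised a \<in> convex hull simple_roots"
    using normalised_in_hull[OF a] Krein_Milman_polytope[of "normalised ` positive_roots"]
      finite_positive_roots by (simp add: simple_roots_def)
  then obtain w where w: "\<forall>e\<in>simple_roots. 0 \<le> w e"
    "(\<Sum>e\<in>simple_roots. w e *\<^sub>R e) = normalised a"
    using convex_hull_finite[OF finite_simple_roots] by blast
  have az: "0 < a \<bullet> z" using a by (simp add: positive_roots_def)
  then have "0 < a \<bullet> normalised a" by (auto simp: normalised_def intro!: divide_pos_pos)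
  also have "a \<bullet> normalised a = (\<Sum>e\<in>simple_roots. w e * (a \<bullet> e))"
    by (simp add: w(2)[symmetric] inner_sum_right)
  also have "\<dots> \<le> 0" using w(1) le by (intro sum_nonpos) (simp add: mult_nonneg_nonpos)
  finally show False by simp
qed

text \<open>A simple root \<open>e\<close> with \<open>a \<bullet> e > 0\<close> reflects \<open>a\<close> to a positive root \<open>a'\<close> with
  \<open>a' \<bullet> z < a \<bullet> z\<close>, unless \<open>a\<close> is a multiple of \<open>e\<close>; and \<open>refl a\<close> is conjugate to
  \<open>refl a'\<close> by \<open>refl e\<close>.\<close>
lemma refl_positive_in_simple_group:
  "a \<in> positive_roots \<Longrightarrow> refl a \<in> refl_group simple_roots"
proof (induction "card {b \<in> positive_roots. b \<bullet> z < a \<bullet> z}" arbitrary: a rule: less_induct)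
  case less
  obtain e where e: "e \<in> simple_roots" "0 < a \<bullet> e"
    using exists_simple_root_inner_pos[OF less.prems] by blast
  show ?case
  proof (cases "\<exists>c. a = c *\<^sub>R e")
    case True
    then obtain c where c: "a = c *\<^sub>R e" by blast
    then have "c \<noteq> 0" using less.prems by (auto simp: positive_roots_def)
    then show ?thesis using c e(1) by (simp add: refl_scaleR refl_in_refl_group)
  next
    case False
    define a' where "a' = refl e a"
    have a': "a' \<in> positive_roots"
      using refl_simple_root_positive[OF e(1) less.prems] False by (simp add: a'_def)
    have ez: "e \<bullet> z = 1" using e(1) simple_roots_subset inner_normalised by blast
    then have "0 < e \<bullet> e" by (metis inner_gt_zero_iff inner_zero_left zero_neq_one)
    then have "a' \<bullet> z < a \<bullet> z" using e(2) ez by (simp add: a'_def refl_def inner_diff_left)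
    then have "{b \<in> positive_roots. b \<bullet> z < a' \<bullet> z} \<subset> {b \<in> positive_roots. b \<bullet> z < a \<bullet> z}"
      using a' by auto
    then have "card {b \<in> positive_roots. b \<bullet> z < a' \<bullet> z} < card {b \<in> positive_roots. b \<bullet> z < a \<bullet> z}"
      using finite_positive_roots by (simp add: psubset_card_mono)
    then have "refl a' \<in> refl_group simple_roots" using less.hyps a' by blast
    moreover have "refl a = refl e \<circ> refl a' \<circ> refl e"
      using orthogonal_transformation_refl_conj[OF orthogonal_transformation_refl, of e a']
      by (simp add: fun_eq_iff a'_def)
    ultimately show ?thesis using e(1) by (simp add: refl_group_comp refl_in_refl_group)
  qed
qed

lemma refl_group_simple_roots: "refl_group simple_roots = refl_group R"
proof
  show "refl_group simple_roots \<subseteq> refl_group R"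
  proof
    fix g assume "g \<in> refl_group simple_roots"
    then obtain es where es: "set es \<subseteq> simple_roots" "g = refl_word es"
      by (auto simp: refl_group_iff_word)
    then have "set es \<subseteq> normalised ` positive_roots" using simple_roots_subset by blast
    then show "g \<in> refl_group R" unfolding es(2)
    proof (induction es)
      case (Cons e es)
      then obtain a where "a \<in> positive_roots" "e = normalised a" by auto
      then have "refl e \<in> refl_group R"
        by (simp add: refl_normalised refl_in_refl_group positive_roots_def)
      moreover have "refl_word es \<in> refl_group R" using Cons by simp
      ultimately show ?case unfolding refl_word_Cons by (rule refl_group_comp)
    qed (simp add: id_in_refl_group)
  qed
next
  show "refl_group R \<subseteq> refl_group simple_roots"
    unfolding refl_group_def[of R]
  proof
    fix g assume "g \<in> gen_group (refl ` R)"
    then show "g \<in> refl_group simple_roots"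
    proof (induction g rule: gen_group.induct)
      case gen_id
      show ?case by (rule id_in_refl_group)
    next
      case (gen_step s g)
      then obtain a where "a \<in> R" "s = refl a" by blast
      then have "s \<in> refl_group simple_roots"
        using positive_roots_cases refl_positive_in_simple_group refl_uminus by metis
      then show ?case using gen_step.IH by (rule refl_group_comp)
    qed
  qed
qed

text \<open>The root \<open>r = u\<^sup>-\<^sup>1 a\<close> changes sign under the simple reflection in \<open>\<alpha>\<close>, so it is
  proportional to \<open>\<alpha>\<close>.\<close>
lemma refl_conj_sign_change:
  assumes u: "u \<in> refl_group R" and \<alpha>: "\<alpha> \<in> simple_roots" and a: "a \<in> R"
    and before: "a \<bullet> u z < 0" and after: "0 < a \<bullet> u (refl \<alpha> z)"
  shows "refl a \<circ> u = u \<circ> refl \<alpha>"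
proof -
  have ortho: "orthogonal_transformation u" by (rule orthogonal_transformation_refl_group[OF u])
  obtain r where r: "r \<in> R" "u r = a"
    using refl_group_image_roots[OF root_system u] a by (metis imageE)
  have "r \<bullet> z < 0" using before r(2) ortho unfolding orthogonal_transformation_def by metis
  then have pos: "- r \<in> positive_roots" by (rule positive_root_uminus[OF r(1)])
  have "0 < refl \<alpha> r \<bullet> z"
    using after r(2) ortho unfolding orthogonal_transformation_def inner_refl_left by metis
  then have "refl \<alpha> (- r) \<notin> positive_roots"
    by (simp add: positive_roots_def linear_neg[OF linear_refl])
  then obtain c where c: "- r = c *\<^sub>R \<alpha>"
    using refl_simple_root_positive[OF \<alpha> pos] by blast
  then have "c \<noteq> 0" using \<open>r \<bullet> z < 0\<close> by auto
  then have "refl r = refl \<alpha>" using c refl_scaleR refl_uminus by metis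
  then show ?thesis
    using orthogonal_transformation_refl_conj[OF ortho, of r] r(2) by (simp add: fun_eq_iff)
qed

text \<open>Along a word fixing \<open>z\<close> whose first letter is the reflection in \<open>a\<close>, the sign of
  \<open>a \<bullet> (prefix) z\<close> is positive for the empty prefix, negative after one letter and positive
  again for the whole word.\<close>
lemma refl_word_sign_change:
  assumes es: "set es \<subseteq> simple_roots" "refl_word es z = z"
    and a: "a \<in> positive_roots" "refl_word (take 1 es) = refl a"
  shows "\<exists>m. 1 \<le> m \<and> m < length es \<and>
           refl a \<circ> refl_word (take m es) = refl_word (take (Suc m) es)"
proof -
  have aR: "a \<in> R" and az: "0 < a \<bullet> z" using a(1) by (auto simp: positive_roots_def)
  then have a_self: "refl a a = - a" by (intro refl_self) auto
  have prefix_in_group: "refl_word (take j es) \<in> refl_group R" for j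
    using es(1) set_take_subset[of j es]
    by (metis refl_group_iff_word refl_group_simple_roots subset_trans)
  define f where "f j = a \<bullet> refl_word (take j es) z" for j
  have "f 1 \<le> 0"
    using a(2) az a_self by (simp add: f_def inner_refl_left[symmetric])
  moreover have "0 < f (length es)" using es(2) az by (simp add: f_def)
  moreover have "es \<noteq> []"
  proof
    assume "es = []"
    then have "refl a a = a" using a(2) by (metis id_apply refl_word_Nil take_Nil)
    then have "- (a \<bullet> z) = a \<bullet> z" using a_self by (metis inner_minus_left)
    then show False using az by simp
  qed
  ultimately obtain m where m: "1 \<le> m" "m < length es" "f m \<le> 0" "0 < f (Suc m)"
    using nat_sign_change[of f 1 0 "length es"] by (auto simp: Suc_le_eq)
  define u where "u = refl_word (take m es)"
  define \<alpha> where "\<alpha> = es ! m"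
  have \<alpha>: "\<alpha> \<in> simple_roots" using es(1) m(2) by (simp add: \<alpha>_def subset_iff)
  have take_Suc: "refl_word (take (Suc m) es) = u \<circ> refl \<alpha>"
    using m(2) by (simp add: take_Suc_conv_app_nth refl_word_append u_def \<alpha>_def)
  have "a \<bullet> u z \<noteq> 0"
    using regular_vector_refl_group[OF root_system prefix_in_group regular] aR
    by (simp add: u_def regular_vector_def)
  then have "a \<bullet> u z < 0" using m(3) by (simp add: f_def u_def)
  moreover have "0 < a \<bullet> u (refl \<alpha> z)" using m(4) take_Suc by (simp add: f_def)
  ultimately have "refl a \<circ> u = u \<circ> refl \<alpha>"
    using refl_conj_sign_change[OF _ \<alpha> aR] prefix_in_group by (simp add: u_def)
  then show ?thesis using m(1,2) take_Suc by (auto simp: u_def)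
qed

lemma refl_word_deletion:
  assumes "set es \<subseteq> simple_roots" and "refl_word es z = z" and "es \<noteq> []"
  shows "\<exists>es'. set es' \<subseteq> simple_roots \<and> length es' < length es \<and> refl_word es' = refl_word es"
proof -
  obtain e rest where es: "es = e # rest" using assms(3) by (cases es) auto
  obtain a where a: "a \<in> positive_roots" "e = normalised a"
    using assms(1) es simple_roots_subset by auto
  then have "refl_word (take 1 es) = refl a" by (simp add: es refl_normalised)
  then obtain m where m: "1 \<le> m" "m < length es"
      "refl a \<circ> refl_word (take m es) = refl_word (take (Suc m) es)"
    using refl_word_sign_change[OF assms(1,2) a(1)] by blast
  have "refl_word (take m es) = refl a \<circ> refl_word (take (m - 1) rest)"
    using m(1) a by (cases m) (simp_all add: es refl_normalised)
  then have "refl_word (take (m - 1) rest) = refl_word (take (Suc m) es)"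
    using m(3) by (simp add: comp_assoc[symmetric])
  then have "refl_word es = refl_word (take (m - 1) rest @ drop (Suc m) es)"
    by (metis append_take_drop_id refl_word_append)
  moreover have "length (take (m - 1) rest @ drop (Suc m) es) < length es" using m es by simp
  moreover have "set (take (m - 1) rest @ drop (Suc m) es) \<subseteq> simple_roots"
    using assms(1) es set_take_subset[of "m - 1" rest] set_drop_subset[of "Suc m" es] by auto
  ultimately show ?thesis by metis
qed

lemma refl_word_fixing_regular:
  assumes "set es \<subseteq> simple_roots" and "refl_word es z = z"
  shows "refl_word es = id"
  using assms
proof (induction "length es" arbitrary: es rule: less_induct)
  case less
  show ?case
  proof (cases "es = []")
    case False
    then obtain es' where "set es' \<subseteq> simple_roots" "length es' < length es"
        "refl_word es' = refl_word es"
      using refl_word_deletion[OF less.prems] by blast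
    then show ?thesis using less by metis
  qed simp
qed

theorem refl_group_stabiliser_trivial:
  assumes "g \<in> refl_group R" and "g z = z"
  shows "g = id"
  using assms refl_word_fixing_regular
  by (metis refl_group_iff_word refl_group_simple_roots)

end

section \<open>Chambers\<close>

lemma refl_group_closed_chamber:
  assumes "finite (refl_group B)"
  shows "\<exists>h\<in>refl_group B. \<forall>b\<in>B. 0 \<le> (b \<bullet> h u) * (b \<bullet> x)"
proof -
  let ?f = "\<lambda>h. h u \<bullet> x"
  have "Max (?f ` refl_group B) \<in> ?f ` refl_group B"
    using assms id_in_refl_group by (intro Max_in) auto
  then obtain h where h: "h \<in> refl_group B" "?f h = Max (?f ` refl_group B)" by auto
  have "0 \<le> (b \<bullet> h u) * (b \<bullet> x)" if b: "b \<in> B" for b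
  proof (cases "b = 0")
    case False
    have "refl b \<circ> h \<in> refl_group B" using b h(1) by (intro refl_group_comp refl_in_refl_group)
    then have "?f (refl b \<circ> h) \<in> ?f ` refl_group B" by (rule imageI)
    then have "?f (refl b \<circ> h) \<le> ?f h" unfolding h(2) by (rule Max_ge[OF finite_imageI[OF assms]])
    then have "refl b (h u) \<bullet> x \<le> h u \<bullet> x" by simp
    then have "0 \<le> (2 / (b \<bullet> b)) * ((h u \<bullet> b) * (b \<bullet> x))"
      by (simp add: refl_def inner_diff_left)
    then show ?thesis using False
      by (metis inner_commute zero_le_mult_iff zero_less_divide_iff inner_gt_zero_iff
          zero_less_numeral not_le)
  qed simp
  then show ?thesis using h(1) by blast
qed

lemma funpow_preserves_chamber:
  assumes k: "orthogonal_transformation k" and perm: "B \<subseteq> k ` B" and x: "regular_vector B x"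
    and same: "\<forall>b\<in>B. 0 \<le> (b \<bullet> k x) * (b \<bullet> x)"
  shows "\<forall>b\<in>B. 0 < (b \<bullet> (k ^^ n) x) * (b \<bullet> x)"
proof (induction n)
  case 0
  show ?case using x by (auto simp: regular_vector_def zero_less_mult_iff linorder_neq_iff)
next
  case (Suc n)
  show ?case
  proof
    fix b assume b: "b \<in> B"
    then obtain b' where b': "b' \<in> B" "b = k b'" using perm by blast
    have inner_k: "k v \<bullet> k w = v \<bullet> w" for v w using k by (simp add: orthogonal_transformation_def)
    have "0 < (b' \<bullet> (k ^^ n) x) * (b' \<bullet> x)" using Suc b'(1) by blast
    moreover have "0 < (b' \<bullet> x) * (b \<bullet> x)"
    proof -
      have "0 \<le> (b' \<bullet> x) * (b \<bullet> x)" using same b b'(2) inner_k by metis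
      moreover have "b' \<bullet> x \<noteq> 0" "b \<bullet> x \<noteq> 0" using x b b'(1) by (auto simp: regular_vector_def)
      ultimately show ?thesis by (simp add: less_le)
    qed
    ultimately have "0 < (b' \<bullet> (k ^^ n) x) * (b \<bullet> x)" by (auto simp: zero_less_mult_iff)
    then show "0 < (b \<bullet> (k ^^ Suc n) x) * (b \<bullet> x)" using b'(2) inner_k by simp
  qed
qed

lemma chamber_orbit_average:
  assumes k: "orthogonal_transformation k" and perm: "B \<subseteq> k ` B" and x: "regular_vector B x"
    and same: "\<forall>b\<in>B. 0 \<le> (b \<bullet> k x) * (b \<bullet> x)"
    and N: "0 < N" "k ^^ N = id"
    and U: "subspace U" "x \<in> U" "k ` U \<subseteq> U"
  shows "\<exists>y\<in>U. k y = y \<and> regular_vector B y"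
proof -
  define y where "y = (\<Sum>n<N. (k ^^ n) x)"
  have "(k ^^ n) x \<in> U" for n by (induction n) (use U in auto)
  then have "y \<in> U" unfolding y_def using U(1) by (simp add: subspace_sum)
  have "k y = (\<Sum>n<N. (k ^^ Suc n) x)"
    unfolding y_def by (simp add: linear_sum[OF orthogonal_transformation_linear[OF k]])
  also have "\<dots> = y"
    using sum.lessThan_Suc_shift[of "\<lambda>n. (k ^^ n) x" N] N(2) by (simp add: y_def)
  finally have "k y = y" .
  moreover have "regular_vector B y"
    unfolding regular_vector_def
  proof
    fix b assume "b \<in> B"
    have "(b \<bullet> y) * (b \<bullet> x) = (\<Sum>n<N. (b \<bullet> (k ^^ n) x) * (b \<bullet> x))"
      by (simp add: y_def inner_sum_right sum_distrib_right)
    also have "\<dots> > 0"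
      using funpow_preserves_chamber[OF k perm x same] \<open>b \<in> B\<close> N(1) by (intro sum_pos) auto
    finally show "b \<bullet> y \<noteq> 0" by auto
  qed
  ultimately show ?thesis using \<open>y \<in> U\<close> by blast
qed

lemma refl_group_finite_order:
  assumes "finite (refl_group R)" and "k \<in> refl_group R"
  shows "\<exists>N>0. k ^^ N = id"
proof -
  have pow: "((\<circ>) k ^^ n) id = k ^^ n" for n by (induction n) auto
  have "inj k" by (rule orthogonal_transformation_inj[OF orthogonal_transformation_refl_group[OF assms(2)]])
  then have "inj ((\<circ>) k)" by (auto simp: inj_def fun_eq_iff)
  moreover have "k ^^ n \<in> refl_group R" for n
    by (induction n) (auto simp only: funpow.simps intro: id_in_refl_group refl_group_comp assms(2))
  then have "finite {f. \<exists>n. f = ((\<circ>) k ^^ n) id}"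
    using assms(1) pow by (auto intro: finite_subset)
  ultimately obtain N where "0 < N" "((\<circ>) k ^^ N) id = id" by (rule funpow_inj_finite)
  then show ?thesis using pow by auto
qed

lemma invariant_chamber_fixed_vector:
  assumes R: "root_system R" "finite (refl_group R)" and k: "k \<in> refl_group R"
    and U: "subspace U" "\<And>v. k v \<in> U \<longleftrightarrow> v \<in> U"
    and x: "x \<in> U" "regular_vector (R \<inter> U) x"
    and same: "\<forall>b\<in>R \<inter> U. 0 \<le> (b \<bullet> k x) * (b \<bullet> x)"
  shows "\<exists>y\<in>U. k y = y \<and> regular_vector (R \<inter> U) y"
proof -
  have "R \<inter> U \<subseteq> k ` (R \<inter> U)"
  proof
    fix b assume b: "b \<in> R \<inter> U"
    then obtain b' where "b' \<in> R" "b = k b'" using refl_group_image_roots[OF R(1) k] by blast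
    then show "b \<in> k ` (R \<inter> U)" using b U(2) by blast
  qed
  moreover obtain N where "0 < N" "k ^^ N = id" using refl_group_finite_order[OF R(2) k] by blast
  ultimately show ?thesis
    using chamber_orbit_average[OF orthogonal_transformation_refl_group[OF k] _ x(2) same]
      U x(1) by blast
qed

section \<open>Eigenspaces of an orthogonal involution\<close>

lemma orth_proj_eq:
  fixes U :: "'a::euclidean_space set"
  assumes "subspace U" and "p \<in> U" and "\<forall>w\<in>U. q \<bullet> w = 0"
  shows "orth_proj U (p + q) = p"
  unfolding orth_proj_def
proof (rule the_equality)
  show "p \<in> U \<and> (\<forall>w\<in>U. (p + q - p) \<bullet> w = 0)" using assms by simp
next
  fix u assume u: "u \<in> U \<and> (\<forall>w\<in>U. (p + q - u) \<bullet> w = 0)"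
  then have "p - u \<in> U" using assms(1,2) subspace_diff by blast
  then have "(p - u) \<bullet> (p - u) = (p + q - u) \<bullet> (p - u) - q \<bullet> (p - u)"
    by (simp add: inner_diff_left inner_add_left algebra_simps)
  also have "\<dots> = 0" using u assms(3) \<open>p - u \<in> U\<close> by simp
  finally show "u = p" by simp
qed

lemma proportional_root_inner_nonzero:
  assumes "proportional_to_root (R \<inter> V \<union> R \<inter> W) p" and "p \<in> V" and "p \<noteq> 0"
    and "subspace W" and "V \<inter> W \<subseteq> {0}" and "regular_vector (R \<inter> V) y"
  shows "p \<bullet> y \<noteq> 0"
proof -
  obtain b c where b: "b \<in> R \<inter> V \<union> R \<inter> W" and c: "p = c *\<^sub>R b"
    using assms(1) by (auto simp: proportional_to_root_def)
  have "b \<notin> W"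
  proof
    assume "b \<in> W"
    then have "p \<in> W" using c assms(4) by (simp add: subspace_scale)
    then show False using assms(2,3,5) by blast
  qed
  then have "b \<bullet> y \<noteq> 0" using b assms(6) by (auto simp: regular_vector_def)
  moreover have "c \<noteq> 0" using c assms(3) by auto
  ultimately show ?thesis using c by simp
qed

locale orthogonal_involution =
  fixes \<sigma> :: "'a::euclidean_space \<Rightarrow> 'a"
  assumes orthogonal: "orthogonal_transformation \<sigma>" and involutive: "\<sigma> \<circ> \<sigma> = id"
begin

lemma linear_sigma: "linear \<sigma>"
  using orthogonal by (rule orthogonal_transformation_linear)

lemma sigma_sigma [simp]: "\<sigma> (\<sigma> x) = x"
  using involutive by (metis comp_apply id_apply)

lemma inner_sigma: "\<sigma> v \<bullet> \<sigma> w = v \<bullet> w"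
  using orthogonal by (simp add: orthogonal_transformation_def)

lemma subspace_minus_space: "subspace (minus_space \<sigma>)"
  using linear_sigma by (simp add: subspace_def minus_space_def linear_add linear_scale linear_0)

lemma subspace_plus_space: "subspace (plus_space \<sigma>)"
  using linear_sigma by (simp add: subspace_def plus_space_def linear_add linear_scale linear_0)

lemma inner_minus_plus: "v \<in> minus_space \<sigma> \<Longrightarrow> w \<in> plus_space \<sigma> \<Longrightarrow> v \<bullet> w = 0"
  using inner_sigma[of v w] by (simp add: minus_space_def plus_space_def)

lemma minus_plus_space_Int: "minus_space \<sigma> \<inter> plus_space \<sigma> \<subseteq> {0}"
  using inner_minus_plus by fastforce

lemma diff_sigma_in_minus_space: "x - \<sigma> x \<in> minus_space \<sigma>"
  by (simp add: minus_space_def linear_diff[OF linear_sigma])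

lemma add_sigma_in_plus_space: "x + \<sigma> x \<in> plus_space \<sigma>"
  by (simp add: plus_space_def linear_add[OF linear_sigma] add.commute)

lemma orth_proj_minus_space: "orth_proj (minus_space \<sigma>) a = (1/2) *\<^sub>R (a - \<sigma> a)"
proof -
  have "a = (1/2) *\<^sub>R (a - \<sigma> a) + (1/2) *\<^sub>R (a + \<sigma> a)"
    by (simp add: algebra_simps flip: scaleR_2)
  also have "orth_proj (minus_space \<sigma>) \<dots> = (1/2) *\<^sub>R (a - \<sigma> a)"
    using subspace_minus_space diff_sigma_in_minus_space add_sigma_in_plus_space
    by (intro orth_proj_eq) (auto simp: subspace_scale inner_minus_plus inner_commute)
  finally show ?thesis .
qed

lemma orth_proj_plus_space: "orth_proj (plus_space \<sigma>) a = (1/2) *\<^sub>R (a + \<sigma> a)"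
proof -
  have "a = (1/2) *\<^sub>R (a + \<sigma> a) + (1/2) *\<^sub>R (a - \<sigma> a)"
    by (simp add: algebra_simps flip: scaleR_2)
  also have "orth_proj (plus_space \<sigma>) \<dots> = (1/2) *\<^sub>R (a + \<sigma> a)"
    using subspace_plus_space diff_sigma_in_minus_space add_sigma_in_plus_space
    by (intro orth_proj_eq) (auto simp: subspace_scale inner_minus_plus)
  finally show ?thesis .
qed

lemma commuting_minus_space_iff:
  assumes "orthogonal_transformation k" and "k \<circ> \<sigma> = \<sigma> \<circ> k"
  shows "k v \<in> minus_space \<sigma> \<longleftrightarrow> v \<in> minus_space \<sigma>"
proof -
  have "\<sigma> (k v) = k (\<sigma> v)" using assms(2) by (metis comp_apply)
  moreover have "- k v = k (- v)"
    using orthogonal_transformation_linear[OF assms(1)] by (simp add: linear_neg)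
  ultimately show ?thesis
    using orthogonal_transformation_inj[OF assms(1)] by (auto simp: minus_space_def inj_eq)
qed

lemma commuting_plus_space_iff:
  assumes "orthogonal_transformation k" and "k \<circ> \<sigma> = \<sigma> \<circ> k"
  shows "k v \<in> plus_space \<sigma> \<longleftrightarrow> v \<in> plus_space \<sigma>"
proof -
  have "\<sigma> (k v) = k (\<sigma> v)" using assms(2) by (metis comp_apply)
  then show ?thesis
    using orthogonal_transformation_inj[OF assms(1)] by (auto simp: plus_space_def inj_eq)
qed

lemma regular_diff_sigma:
  assumes "regular_vector R x"
  shows "regular_vector (R \<inter> minus_space \<sigma>) (x - \<sigma> x)"
proof -
  have "b \<bullet> \<sigma> x = - (b \<bullet> x)" if "b \<in> minus_space \<sigma>" for b
    using inner_sigma[of b x] that by (simp add: minus_space_def)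
  then show ?thesis using assms by (auto simp: regular_vector_def inner_diff_right)
qed

lemma regular_add_sigma:
  assumes "regular_vector R x"
  shows "regular_vector (R \<inter> plus_space \<sigma>) (x + \<sigma> x)"
proof -
  have "b \<bullet> \<sigma> x = b \<bullet> x" if "b \<in> plus_space \<sigma>" for b
    using inner_sigma[of b x] that by (simp add: plus_space_def)
  then show ?thesis using assms by (auto simp: regular_vector_def inner_add_right)
qed

lemma refl_group_commute_sigma:
  assumes "B \<subseteq> minus_space \<sigma> \<union> plus_space \<sigma>" and "g \<in> refl_group B"
  shows "g \<circ> \<sigma> = \<sigma> \<circ> g"
  using assms(2) unfolding refl_group_def
proof (rule gen_group_commute[rotated], safe)
  fix b assume "b \<in> B"
  then have "refl (\<sigma> b) = refl b" using assms(1) by (auto simp: minus_space_def plus_space_def)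
  then show "refl b \<circ> \<sigma> = \<sigma> \<circ> refl b"
    using orthogonal_transformation_refl_conj[OF orthogonal, of b] by (simp add: fun_eq_iff)
qed

end

section \<open>The centraliser of a special involution\<close>

lemma (in orthogonal_involution) special_inner_nonzero:
  assumes special: "special_involution R \<sigma>" and a: "a \<in> R"
    and y1: "y1 \<in> minus_space \<sigma>" "regular_vector (R \<inter> minus_space \<sigma>) y1"
    and y2: "y2 \<in> plus_space \<sigma>" "regular_vector (R \<inter> plus_space \<sigma>) y2"
  shows "a \<bullet> y1 \<noteq> 0 \<or> a \<bullet> y2 \<noteq> 0"
proof -
  define p1 where "p1 = orth_proj (minus_space \<sigma>) a"
  define p2 where "p2 = orth_proj (plus_space \<sigma>) a"
  have p1: "p1 \<in> minus_space \<sigma>" and p2: "p2 \<in> plus_space \<sigma>"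
    using diff_sigma_in_minus_space add_sigma_in_plus_space subspace_minus_space subspace_plus_space
    by (simp_all add: p1_def p2_def orth_proj_minus_space orth_proj_plus_space subspace_scale)
  have a_split: "a = p1 + p2"
    by (simp add: p1_def p2_def orth_proj_minus_space orth_proj_plus_space algebra_simps
        flip: scaleR_2)
  have "a \<bullet> y1 = p1 \<bullet> y1" and "a \<bullet> y2 = p2 \<bullet> y2"
    using inner_minus_plus[OF y1(1) p2] inner_minus_plus[OF p1 y2(1)] a_split
    by (simp_all add: inner_add_left inner_commute[of p2 y1])
  moreover have "proportional_to_root (R \<inter> minus_space \<sigma> \<union> R \<inter> plus_space \<sigma>) p1 \<or>
      proportional_to_root (R \<inter> plus_space \<sigma> \<union> R \<inter> minus_space \<sigma>) p2"
    using special a by (simp add: special_involution_def p1_def p2_def Un_commute)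
  moreover have "p1 = 0 \<Longrightarrow> a \<bullet> y2 \<noteq> 0" and "p2 = 0 \<Longrightarrow> a \<bullet> y1 \<noteq> 0"
    using a a_split p1 p2 y1(2) y2(2) by (auto simp: regular_vector_def)
  ultimately show ?thesis
    using proportional_root_inner_nonzero[OF _ p1 _ subspace_plus_space _ y1(2)]
      proportional_root_inner_nonzero[OF _ p2 _ subspace_minus_space _ y2(2)]
      minus_plus_space_Int by (auto simp: Int_commute)
qed

locale finite_reflection_group_involution = orthogonal_involution \<sigma>
  for \<sigma> :: "'a::euclidean_space \<Rightarrow> 'a" +
  fixes R :: "'a set"
  assumes root_system: "root_system R" and finite_group: "finite (refl_group R)"
begin

abbreviation "minus_roots \<equiv> R \<inter> minus_space \<sigma>"
abbreviation "plus_roots \<equiv> R \<inter> plus_space \<sigma>"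

lemma product_subset_centraliser:
  "set_prod (refl_group minus_roots) (refl_group plus_roots) \<subseteq> centraliser (refl_group R) \<sigma>"
proof
  fix g assume "g \<in> set_prod (refl_group minus_roots) (refl_group plus_roots)"
  then obtain g1 g2 where g: "g = g1 \<circ> g2" "g1 \<in> refl_group minus_roots" "g2 \<in> refl_group plus_roots"
    by (auto simp: set_prod_def)
  have "g \<in> refl_group R"
    using g refl_group_mono[of minus_roots R] refl_group_mono[of plus_roots R]
    by (auto intro: refl_group_comp)
  moreover have "g1 \<circ> \<sigma> = \<sigma> \<circ> g1" "g2 \<circ> \<sigma> = \<sigma> \<circ> g2"
    using g(2,3) by (auto intro: refl_group_commute_sigma)
  then have "g \<circ> \<sigma> = \<sigma> \<circ> g" unfolding g(1) by (metis comp_assoc)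
  ultimately show "g \<in> centraliser (refl_group R) \<sigma>" by (simp add: centraliser_def)
qed

lemma finite_refl_subgroup: "B \<subseteq> R \<Longrightarrow> finite (refl_group B)"
  by (rule finite_subset[OF refl_group_mono finite_group])

text \<open>Choose \<open>h1\<close> for \<open>x1\<close> first, then \<open>h2\<close> for \<open>x2\<close>; \<open>h2\<close> does not undo the first
  choice, because \<open>h1 (g x1)\<close> lies in \<open>minus_space \<sigma>\<close>, which \<open>refl_group plus_roots\<close> fixes
  pointwise.\<close>
lemma exists_chamber_normalisation:
  assumes g: "g \<in> refl_group R" "g \<circ> \<sigma> = \<sigma> \<circ> g"
    and x1: "x1 \<in> minus_space \<sigma>"
  shows "\<exists>h1\<in>refl_group minus_roots. \<exists>h2\<in>refl_group plus_roots.
           (\<forall>b\<in>minus_roots. 0 \<le> (b \<bullet> (h2 \<circ> h1 \<circ> g) x1) * (b \<bullet> x1)) \<and>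
           (\<forall>b\<in>plus_roots. 0 \<le> (b \<bullet> (h2 \<circ> h1 \<circ> g) x2) * (b \<bullet> x2))"
proof -
  obtain h1 where h1: "h1 \<in> refl_group minus_roots"
      "\<forall>b\<in>minus_roots. 0 \<le> (b \<bullet> h1 (g x1)) * (b \<bullet> x1)"
    using refl_group_closed_chamber[OF finite_refl_subgroup] by blast
  obtain h2 where h2: "h2 \<in> refl_group plus_roots"
      "\<forall>b\<in>plus_roots. 0 \<le> (b \<bullet> h2 (h1 (g x2))) * (b \<bullet> x2)"
    using refl_group_closed_chamber[OF finite_refl_subgroup] by blast
  have "h1 \<circ> \<sigma> = \<sigma> \<circ> h1" using h1(1) by (auto intro: refl_group_commute_sigma)
  then have "h1 (g x1) \<in> minus_space \<sigma>"
    using x1 g h1(1) commuting_minus_space_iff orthogonal_transformation_refl_group by blast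
  then have "h2 (h1 (g x1)) = h1 (g x1)"
    using h2(1) inner_minus_plus by (intro refl_group_fixes_orthogonal) auto
  then show ?thesis using h1 h2 by (intro bexI[of _ h1] bexI[of _ h2]) auto
qed

lemma exists_fixed_regular_vectors:
  assumes k: "k \<in> refl_group R" "k \<circ> \<sigma> = \<sigma> \<circ> k"
    and x1: "x1 \<in> minus_space \<sigma>" "regular_vector minus_roots x1"
      "\<forall>b\<in>minus_roots. 0 \<le> (b \<bullet> k x1) * (b \<bullet> x1)"
    and x2: "x2 \<in> plus_space \<sigma>" "regular_vector plus_roots x2"
      "\<forall>b\<in>plus_roots. 0 \<le> (b \<bullet> k x2) * (b \<bullet> x2)"
  obtains y1 y2 where "y1 \<in> minus_space \<sigma>" "k y1 = y1" "regular_vector minus_roots y1"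
    and "y2 \<in> plus_space \<sigma>" "k y2 = y2" "regular_vector plus_roots y2"
proof -
  have ortho: "orthogonal_transformation k" by (rule orthogonal_transformation_refl_group[OF k(1)])
  obtain y1 where "y1 \<in> minus_space \<sigma>" "k y1 = y1" "regular_vector minus_roots y1"
    using invariant_chamber_fixed_vector[OF root_system finite_group k(1) subspace_minus_space
        commuting_minus_space_iff[OF ortho k(2)] x1] by blast
  moreover obtain y2 where "y2 \<in> plus_space \<sigma>" "k y2 = y2" "regular_vector plus_roots y2"
    using invariant_chamber_fixed_vector[OF root_system finite_group k(1) subspace_plus_space
        commuting_plus_space_iff[OF ortho k(2)] x2] by blast
  ultimately show thesis using that by blast
qed

lemma fixes_regular_pair_imp_id:
  assumes special: "special_involution R \<sigma>" and k: "k \<in> refl_group R"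
    and y1: "y1 \<in> minus_space \<sigma>" "k y1 = y1" "regular_vector minus_roots y1"
    and y2: "y2 \<in> plus_space \<sigma>" "k y2 = y2" "regular_vector plus_roots y2"
  shows "k = id"
proof -
  have "finite R" using root_system by (simp add: root_system_def)
  then obtain t where t: "regular_vector R (y1 + t *\<^sub>R y2)"
    using exists_regular_combination special_inner_nonzero[OF special _ y1(1,3) y2(1,3)] by blast
  have "k (y1 + t *\<^sub>R y2) = y1 + t *\<^sub>R y2"
    using y1(2) y2(2) orthogonal_transformation_linear[OF orthogonal_transformation_refl_group[OF k]]
    by (simp add: linear_add linear_scale)
  then show ?thesis
    using positive_system.refl_group_stabiliser_trivial[OF positive_system.intro[OF root_system t] k]
    by blast
qed

lemma centraliser_subset_product:
  assumes special: "special_involution R \<sigma>"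
  shows "centraliser (refl_group R) \<sigma> \<subseteq> set_prod (refl_group minus_roots) (refl_group plus_roots)"
proof
  fix g assume "g \<in> centraliser (refl_group R) \<sigma>"
  then have g: "g \<in> refl_group R" "g \<circ> \<sigma> = \<sigma> \<circ> g" by (auto simp: centraliser_def)
  obtain x where x: "regular_vector R x"
    using exists_regular_vector[of R] root_system by (auto simp: root_system_def)
  define x1 where "x1 = x - \<sigma> x"
  define x2 where "x2 = x + \<sigma> x"
  obtain h1 h2 where h: "h1 \<in> refl_group minus_roots" "h2 \<in> refl_group plus_roots"
    and chamber: "\<forall>b\<in>minus_roots. 0 \<le> (b \<bullet> (h2 \<circ> h1 \<circ> g) x1) * (b \<bullet> x1)"
      "\<forall>b\<in>plus_roots. 0 \<le> (b \<bullet> (h2 \<circ> h1 \<circ> g) x2) * (b \<bullet> x2)"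
    using exists_chamber_normalisation[OF g, of x1 x2] diff_sigma_in_minus_space x1_def by blast
  define k where "k = h2 \<circ> h1 \<circ> g"
  have "h1 \<in> refl_group R" "h2 \<in> refl_group R"
    using h refl_group_mono[of minus_roots R] refl_group_mono[of plus_roots R] by auto
  then have kG: "k \<in> refl_group R" using g(1) by (simp add: k_def refl_group_comp)
  have "h1 \<circ> \<sigma> = \<sigma> \<circ> h1" "h2 \<circ> \<sigma> = \<sigma> \<circ> h2"
    using h by (auto intro: refl_group_commute_sigma)
  then have kc: "k \<circ> \<sigma> = \<sigma> \<circ> k" using g(2) by (metis k_def comp_assoc)
  obtain y1 y2 where "y1 \<in> minus_space \<sigma>" "k y1 = y1" "regular_vector minus_roots y1"
    and "y2 \<in> plus_space \<sigma>" "k y2 = y2" "regular_vector plus_roots y2"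
    using exists_fixed_regular_vectors[OF kG kc _ _ chamber(1)[folded k_def] _ _ chamber(2)[folded k_def]]
      diff_sigma_in_minus_space add_sigma_in_plus_space regular_diff_sigma[OF x]
      regular_add_sigma[OF x] x1_def x2_def by blast
  then have k_id: "k = id" using fixes_regular_pair_imp_id[OF special kG] by blast
  obtain h1' h2' where h': "h1' \<in> refl_group minus_roots" "h2' \<in> refl_group plus_roots"
    and inv: "h1' \<circ> h1 = id" "h2' \<circ> h2 = id"
    using refl_group_inverse h by blast
  have "h1' \<circ> h2' = h1' \<circ> h2' \<circ> k" using k_id by simp
  also have "\<dots> = h1' \<circ> (h2' \<circ> h2) \<circ> h1 \<circ> g" by (simp add: k_def comp_assoc)
  also have "\<dots> = g" using inv by simp
  finally show "g \<in> set_prod (refl_group minus_roots) (refl_group plus_roots)"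
    using h' by (auto simp: set_prod_def)
qed

end

theorem proposition10:
  fixes R :: "'a::euclidean_space set" and \<sigma> :: "'a \<Rightarrow> 'a"
  assumes "root_system R"
    and "finite (refl_group R)"
    and "special_involution R \<sigma>"
  shows "centraliser (refl_group R) \<sigma> =
           set_prod (refl_group (R \<inter> minus_space \<sigma>)) (refl_group (R \<inter> plus_space \<sigma>))"
proof -
  have "orthogonal_transformation \<sigma>" and "\<sigma> \<circ> \<sigma> = id"
    using assms(3) orthogonal_transformation_refl_group by (auto simp: special_involution_def)
  then interpret finite_reflection_group_involution \<sigma> R
    using assms(1,2) by unfold_locales
  show ?thesis
    using product_subset_centraliser centraliser_subset_product[OF assms(3)] by blast
qed

end
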